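(* Let $t \geq 1$ be an integer, let $\mathcal{A}_1, \dots, \mathcal{A}_k$ be cross-$t$-intersecting families of finite sets, and let $\mathcal{A} = \bigcup_{i=1}^k \mathcal{A}_i$. Then (i) $\mathcal{A}^{t,+} = \bigcup_{i=1}^k \mathcal{A}_i^{t,+}$; (ii) $\mathcal{A}^{t,-} = \bigcup_{i=1}^k \mathcal{A}_i^{t,-}$; (iii) $|\mathcal{A}^{t,-}| = \sum_{i=1}^k |\mathcal{A}_i^{t,-}|$.
   Context: Families $\mathcal{A}_1, \dots, \mathcal{A}_k$ (not necessarily distinct or non-empty) are cross-$t$-intersecting if for all $i \neq j$ in $\{1,\dots,k\}$, $|A \cap B| \geq t$ for every $A \in \mathcal{A}_i$ and $B \in \mathcal{A}_j$. For a family $\mathcal{B}$, $\mathcal{B}^{t,+} = \{B \in \mathcal{B} : |B \cap C| \geq t \text{ for all } C \in \mathcal{B} \text{ with } C \neq B\}$ and $\mathcal{B}^{t,-} = \mathcal{B} \setminus \mathcal{B}^{t,+}$. *)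

theory Defs
  imports Main
begin

definition cross_t_intersecting :: "nat \<Rightarrow> nat \<Rightarrow> (nat \<Rightarrow> 'a set set) \<Rightarrow> bool" where
  "cross_t_intersecting t k F \<longleftrightarrow>
     (\<forall>i\<in>{1..k}. \<forall>j\<in>{1..k}. i \<noteq> j \<longrightarrow> (\<forall>A\<in>F i. \<forall>B\<in>F j. t \<le> card (A \<inter> B)))"

definition tplus :: "nat \<Rightarrow> 'a set set \<Rightarrow> 'a set set" where
  "tplus t \<B> = {B \<in> \<B>. \<forall>C\<in>\<B>. C \<noteq> B \<longrightarrow> t \<le> card (B \<inter> C)}"

definition tminus :: "nat \<Rightarrow> 'a set set \<Rightarrow> 'a set set" where
  "tminus t \<B> = \<B> - tplus t \<B>"

end

theory Submission
  imports Defs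
begin

text \<open>A set that fails to \<open>t\<close>-intersect some other member of its own family \<open>F i\<close> cannot lie in
  any other family \<open>F j\<close>, since it would \<open>t\<close>-intersect all of \<open>F i\<close> there. Hence the families \<open>tminus t (F i)\<close>
  are pairwise disjoint, and membership in \<open>tplus\<close> of the union is decided inside one's own family,
  because the cross condition already settles the comparisons with the other families.\<close>

definition cross_intersecting_on :: "nat \<Rightarrow> 'i set \<Rightarrow> ('i \<Rightarrow> 'a set set) \<Rightarrow> bool" where
  "cross_intersecting_on t I F \<longleftrightarrow>
     (\<forall>i\<in>I. \<forall>j\<in>I. i \<noteq> j \<longrightarrow> (\<forall>A\<in>F i. \<forall>B\<in>F j. t \<le> card (A \<inter> B)))"

lemma cross_t_intersecting_iff_on: "cross_t_intersecting t k F \<longleftrightarrow> cross_intersecting_on t {1..k} F"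
  unfolding cross_t_intersecting_def cross_intersecting_on_def ..

lemma cross_intersecting_onD:
  "cross_intersecting_on t I F \<Longrightarrow> i \<in> I \<Longrightarrow> j \<in> I \<Longrightarrow> i \<noteq> j \<Longrightarrow> A \<in> F i \<Longrightarrow> B \<in> F j
    \<Longrightarrow> t \<le> card (A \<inter> B)"
  unfolding cross_intersecting_on_def by blast

lemma tplus_UN:
  assumes cross: "cross_intersecting_on t I F"
  shows "tplus t (\<Union>i\<in>I. F i) = (\<Union>i\<in>I. tplus t (F i))"
proof
  show "tplus t (\<Union>i\<in>I. F i) \<subseteq> (\<Union>i\<in>I. tplus t (F i))"
    unfolding tplus_def by blast
next
  show "(\<Union>i\<in>I. tplus t (F i)) \<subseteq> tplus t (\<Union>i\<in>I. F i)"
  proof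
    fix B assume "B \<in> (\<Union>i\<in>I. tplus t (F i))"
    then obtain i where i: "i \<in> I" "B \<in> F i" and own: "\<forall>C\<in>F i. C \<noteq> B \<longrightarrow> t \<le> card (B \<inter> C)"
      unfolding tplus_def by blast
    have "t \<le> card (B \<inter> C)" if "C \<in> F j" "j \<in> I" "C \<noteq> B" for C j
    proof (cases "j = i")
      case True
      then show ?thesis using own that by blast
    next
      case False
      then show ?thesis using cross_intersecting_onD[OF cross \<open>i \<in> I\<close> \<open>j \<in> I\<close> _ \<open>B \<in> F i\<close> \<open>C \<in> F j\<close>] by auto
    qed
    then show "B \<in> tplus t (\<Union>i\<in>I. F i)"
      using i unfolding tplus_def by blast
  qed
qed

lemma tminus_notin_other:
  assumes cross: "cross_intersecting_on t I F"
    and "i \<in> I" "j \<in> I" "i \<noteq> j" "B \<in> tminus t (F i)"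
  shows "B \<notin> F j"
proof
  assume "B \<in> F j"
  obtain C where "C \<in> F i" "\<not> t \<le> card (B \<inter> C)"
    using \<open>B \<in> tminus t (F i)\<close> unfolding tminus_def tplus_def by blast
  with cross_intersecting_onD[OF cross \<open>j \<in> I\<close> \<open>i \<in> I\<close>] \<open>i \<noteq> j\<close> \<open>B \<in> F j\<close> show False
    by auto
qed

lemma tminus_disjoint:
  assumes "cross_intersecting_on t I F" "i \<in> I" "j \<in> I" "i \<noteq> j"
  shows "tminus t (F i) \<inter> tminus t (F j) = {}"
  using tminus_notin_other[OF assms] unfolding tminus_def by blast

lemma tminus_UN:
  assumes cross: "cross_intersecting_on t I F"
  shows "tminus t (\<Union>i\<in>I. F i) = (\<Union>i\<in>I. tminus t (F i))"
proof -
  have "B \<notin> tplus t (F j)" if "i \<in> I" "j \<in> I" "B \<in> tminus t (F i)" for i j B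
  proof (cases "j = i")
    case True
    then show ?thesis using that(3) unfolding tminus_def by blast
  next
    case False
    then show ?thesis using tminus_notin_other[OF cross that(1,2) _ that(3)] unfolding tplus_def by blast
  qed
  then have "(\<Union>i\<in>I. F i) - (\<Union>i\<in>I. tplus t (F i)) = (\<Union>i\<in>I. F i - tplus t (F i))"
    unfolding tminus_def by blast
  then show ?thesis
    unfolding tminus_def tplus_UN[OF cross] .
qed

lemma card_tminus_UN:
  assumes "cross_intersecting_on t I F" "finite I" "\<forall>i\<in>I. finite (F i)"
  shows "card (tminus t (\<Union>i\<in>I. F i)) = (\<Sum>i\<in>I. card (tminus t (F i)))"
  unfolding tminus_UN[OF assms(1)]
proof (rule card_UN_disjoint)
  show "\<forall>i\<in>I. finite (tminus t (F i))"
    using assms(3) unfolding tminus_def by auto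
  show "\<forall>i\<in>I. \<forall>j\<in>I. i \<noteq> j \<longrightarrow> tminus t (F i) \<inter> tminus t (F j) = {}"
    using tminus_disjoint[OF assms(1)] by blast
qed (fact assms(2))

theorem lemma2p1:
  fixes t k :: nat and F :: "nat \<Rightarrow> 'a set set"
  assumes "t \<ge> 1"
    and "\<forall>i\<in>{1..k}. finite (F i)"
    and "\<forall>i\<in>{1..k}. \<forall>A\<in>F i. finite A"
    and "cross_t_intersecting t k F"
  shows "tplus t (\<Union>i\<in>{1..k}. F i) = (\<Union>i\<in>{1..k}. tplus t (F i)) \<and>
         tminus t (\<Union>i\<in>{1..k}. F i) = (\<Union>i\<in>{1..k}. tminus t (F i)) \<and>
         card (tminus t (\<Union>i\<in>{1..k}. F i)) = (\<Sum>i\<in>{1..k}. card (tminus t (F i)))"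
proof -
  have cross: "cross_intersecting_on t {1..k} F"
    using assms(4) by (simp add: cross_t_intersecting_iff_on)
  show ?thesis
    using tplus_UN[OF cross] tminus_UN[OF cross] card_tminus_UN[OF cross _ assms(2)] by simp
qed

end
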